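(* For every $t>0$ and every $u_0\in\exp L^2(\mathbb{R}^N)$, the function $(e^{-t\Delta^2}u_0)^{\sharp\sharp}$ belongs to $L^\infty(0,\infty)$.
   Context: $e^{-t\Delta^2}$ denotes the biharmonic heat semigroup on $\mathbb{R}^N$: $e^{-t\Delta^2}\varphi=E_t\star\varphi$ with $E_t(x)=(2\pi)^{-N}\int_{\mathbb{R}^N}e^{-t|\xi|^4}e^{ix\cdot\xi}\,d\xi$. The Orlicz space $\exp L^2(\mathbb{R}^N)$ is the set of $u\in L^1_{loc}(\mathbb{R}^N)$ such that $\int_{\mathbb{R}^N}(e^{|u(x)|^2/\alpha^2}-1)\,dx<\infty$ for some $\alpha>0$. For a measurable a.e. finite $u$ on $\mathbb{R}^N$, $\mu_u(\tau)=|\{x:|u(x)|>\tau\}|$, the decreasing rearrangement is $u^\sharp(r)=\inf\{\tau>0:\mu_u(\tau)\leq r\}$ for $r\geq0$, and $u^{\sharp\sharp}(r)=\frac1r\int_0^r u^\sharp(\eta)\,d\eta$ for $r>0$. *)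

theory Defs
  imports "HOL-Analysis.Analysis"
begin

definition biharm_kernel :: "real \<Rightarrow> 'a::euclidean_space \<Rightarrow> complex" where
  "biharm_kernel t x =
     complex_of_real (1 / (2 * pi) ^ DIM('a)) *
     (\<integral>\<xi>. complex_of_real (exp (- t * norm \<xi> ^ 4)) * cis (x \<bullet> \<xi>) \<partial>lborel)"

definition biharm_heat :: "real \<Rightarrow> ('a::euclidean_space \<Rightarrow> real) \<Rightarrow> 'a \<Rightarrow> complex" where
  "biharm_heat t \<phi> x = (\<integral>y. biharm_kernel t (x - y) * complex_of_real (\<phi> y) \<partial>lebesgue)"

definition loc_integrable :: "('a::euclidean_space \<Rightarrow> real) \<Rightarrow> bool" where
  "loc_integrable u \<longleftrightarrow> u \<in> borel_measurable lebesgue \<and>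
     (\<forall>K. compact K \<longrightarrow> set_integrable lebesgue K u)"

definition expL2 :: "('a::euclidean_space \<Rightarrow> real) set" where
  "expL2 = {u. loc_integrable u \<and>
     (\<exists>\<alpha>>0. (\<integral>\<^sup>+x. ennreal (exp ((u x)\<^sup>2 / \<alpha>\<^sup>2) - 1) \<partial>lebesgue) < \<infinity>)}"

definition distrib_fun :: "('a::euclidean_space \<Rightarrow> 'b::real_normed_vector) \<Rightarrow> real \<Rightarrow> ennreal" where
  "distrib_fun u \<tau> = emeasure lebesgue {x. norm (u x) > \<tau>}"

text \<open>Decreasing rearrangement u^sharp(r) = inf {tau > 0. mu_u(tau) \<le> r}
  (value in [0,\<infinity>], the infimum of the empty set being \<infinity>).\<close>
definition rearr :: "('a::euclidean_space \<Rightarrow> 'b::real_normed_vector) \<Rightarrow> real \<Rightarrow> ennreal" where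
  "rearr u r = (INF \<tau>\<in>{\<tau>::real. \<tau> > 0 \<and> distrib_fun u \<tau> \<le> ennreal r}. ennreal \<tau>)"

definition rearr2 :: "('a::euclidean_space \<Rightarrow> 'b::real_normed_vector) \<Rightarrow> real \<Rightarrow> ennreal" where
  "rearr2 u r = (\<integral>\<^sup>+\<eta>\<in>{0..r}. rearr u \<eta> \<partial>lborel) / ennreal r"

definition Linfty_pos :: "(real \<Rightarrow> ennreal) \<Rightarrow> bool" where
  "Linfty_pos f \<longleftrightarrow> f \<in> borel_measurable (restrict_space lborel {0<..}) \<and>
     (\<exists>C::real. AE r in lborel. r > 0 \<longrightarrow> f r \<le> ennreal C)"

end

theory Submission
  imports Defs "HOL-Probability.Characteristic_Functions"
begin

(* Up to the factor (2 pi)^-N, the kernel E_t is the Fourier transform of the integrable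
   function exp(-t |xi|^4). Weighting |E_t|^2 by a Gaussian exp(-|x|^2 / 2a^2), whose Fourier
   transform is again a Gaussian, turns its integral into an absolutely convergent double
   integral, which 2 a b <= a^2 + b^2 bounds by a multiple of the integral of exp(-2t |xi|^4);
   letting a tend to infinity (Fatou) shows E_t in L^2. Since e^s - 1 >= s, exp L^2 is contained
   in L^2, so e^{-t Delta^2} u0 = E_t * u0 is bounded, and the averages of the decreasing
   rearrangement of a bounded function are bounded by its supremum. *)

section \<open>Integration on Euclidean space\<close>

lemma cis_sum: "finite A \<Longrightarrow> cis (\<Sum>i\<in>A. f i) = (\<Prod>i\<in>A. cis (f i))"
  by (induction A rule: finite_induct) (auto simp: cis_mult[symmetric])

lemma borel_measurable_cis[measurable]: "cis \<in> borel_measurable borel"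
  by (intro borel_measurable_continuous_onI continuous_intros)

lemma borel_measurable_mono_ennreal:
  fixes f :: "real \<Rightarrow> ennreal"
  assumes "mono f"
  shows "f \<in> borel_measurable borel"
proof (rule borel_measurableI_greater)
  fix y :: ennreal
  have "is_interval {x. y < f x}"
    using assms unfolding is_interval_1 by (auto dest: monoD intro: less_le_trans)
  then show "{x \<in> space borel. y < f x} \<in> sets borel"
    by (simp add: real_interval_borel_measurable)
qed

lemma integral_lborel_prod:
  fixes h :: "'a::euclidean_space \<Rightarrow> real \<Rightarrow> complex"
  assumes int: "\<And>b. b \<in> Basis \<Longrightarrow> integrable lborel (h b)"
  shows "(\<integral>x. (\<Prod>b\<in>Basis. h b (x \<bullet> b)) \<partial>lborel) = (\<Prod>b\<in>Basis. (\<integral>x. h b x \<partial>lborel))"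
proof -
  interpret P: product_sigma_finite "\<lambda>_::'a. lborel::real measure" ..
  have [measurable]: "\<And>b. b \<in> Basis \<Longrightarrow> h b \<in> borel_measurable borel"
    using int by (simp add: borel_measurable_integrable)
  have "(\<integral>x. (\<Prod>b\<in>Basis. h b (x \<bullet> b)) \<partial>lborel) =
     (\<integral>y. (\<Prod>b\<in>Basis. h b ((\<Sum>c\<in>Basis. y c *\<^sub>R c) \<bullet> b)) \<partial>(\<Pi>\<^sub>M b\<in>Basis. lborel))"
    by (subst lborel_eq) (simp add: integral_distr)
  also have "\<dots> = (\<integral>y. (\<Prod>b\<in>Basis. h b (y b)) \<partial>(\<Pi>\<^sub>M b\<in>Basis. lborel))"
    by (simp add: inner_sum_left inner_Basis if_distrib sum.delta cong: if_cong)
  also have "\<dots> = (\<Prod>b\<in>Basis. (\<integral>x. h b x \<partial>lborel))"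
    by (rule P.product_integral_prod) (auto intro: int)
  finally show ?thesis .
qed

lemma integrable_mult_bounded:
  fixes f h :: "'b \<Rightarrow> real"
  assumes f: "integrable M f" and [measurable]: "h \<in> borel_measurable M"
    and bound: "\<And>x. \<bar>h x\<bar> \<le> B"
  shows "integrable M (\<lambda>x. f x * h x)"
proof (rule Bochner_Integration.integrable_bound)
  show "integrable M (\<lambda>x. \<bar>f x\<bar> * B)"
    using f by (intro integrable_mult_left integrable_abs)
  show "AE x in M. norm (f x * h x) \<le> norm (\<bar>f x\<bar> * B)"
    using bound order_trans[OF abs_ge_zero bound]
    by (intro AE_I2) (simp add: abs_mult mult_left_mono)
qed (use f in \<open>simp add: borel_measurable_integrable\<close>)

lemma nn_integral_lborel_translate:
  fixes f :: "'a::euclidean_space \<Rightarrow> ennreal"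
  assumes [measurable]: "f \<in> borel_measurable borel"
  shows "(\<integral>\<^sup>+\<xi>. f (\<xi> - \<eta>) \<partial>lborel) = (\<integral>\<^sup>+\<xi>. f \<xi> \<partial>lborel)"
  by (subst lborel_affine[of 1 "- \<eta>"]) (simp_all add: nn_integral_density nn_integral_distr)

lemma nn_integral_lborel_reflect:
  fixes f :: "'a::euclidean_space \<Rightarrow> ennreal"
  assumes [measurable]: "f \<in> borel_measurable borel"
  shows "(\<integral>\<^sup>+\<eta>. f (\<xi> - \<eta>) \<partial>lborel) = (\<integral>\<^sup>+\<eta>. f \<eta> \<partial>lborel)"
  by (subst lborel_affine[of "-1" \<xi>]) (simp_all add: nn_integral_density nn_integral_distr)

lemma integrable_lborel_pair_bound:
  fixes f :: "'a::euclidean_space \<times> 'b::euclidean_space \<Rightarrow> 'c::{banach, second_countable_topology}"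
  assumes f: "f \<in> borel_measurable (lborel \<Otimes>\<^sub>M lborel)"
    and u: "integrable lborel u" and v: "integrable lborel v"
    and bound: "\<And>x y. norm (f (x, y)) \<le> u x * v y"
  shows "integrable (lborel \<Otimes>\<^sub>M lborel) f"
proof (rule Bochner_Integration.integrable_bound[OF _ f])
  have [measurable]: "u \<in> borel_measurable lborel" "v \<in> borel_measurable lborel"
    using u v by (simp_all add: borel_measurable_integrable)
  show "integrable (lborel \<Otimes>\<^sub>M lborel) (\<lambda>p. u (fst p) * v (snd p))"
  proof (rule lborel_pair.Fubini_integrable)
    have "integrable lborel (\<lambda>x. \<bar>u x\<bar> * (\<integral>y. \<bar>v y\<bar> \<partial>lborel))"
      using u by (intro integrable_mult_left integrable_abs)
    then show "integrable lborel (\<lambda>x. \<integral>y. norm (u (fst (x, y)) * v (snd (x, y))) \<partial>lborel)"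
      by (simp add: abs_mult)
    show "AE x in lborel. integrable lborel (\<lambda>y. u (fst (x, y)) * v (snd (x, y)))"
      using v by simp
  qed measurable
  show "AE p in lborel \<Otimes>\<^sub>M lborel. norm (f p) \<le> norm (u (fst p) * v (snd p))"
    by (intro AE_I2) (metis abs_ge_self bound order_trans prod.collapse real_norm_def)
qed

lemma integral_lborel_swap_bound:
  fixes f :: "'a::euclidean_space \<Rightarrow> 'b::euclidean_space \<Rightarrow> 'c::{banach, second_countable_topology}"
  assumes "(\<lambda>(x, y). f x y) \<in> borel_measurable (lborel \<Otimes>\<^sub>M lborel)"
    and "integrable lborel u" "integrable lborel v"
    and "\<And>x y. norm (f x y) \<le> u x * v y"
  shows "(\<integral>x. (\<integral>y. f x y \<partial>lborel) \<partial>lborel) = (\<integral>y. (\<integral>x. f x y \<partial>lborel) \<partial>lborel)"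
proof (rule lborel_pair.Fubini_integral[symmetric])
  show "integrable (lborel \<Otimes>\<^sub>M lborel) (\<lambda>(x, y). f x y)"
    using assms by (intro integrable_lborel_pair_bound) auto
qed

(* 2 f(xi) f(eta) <= f(xi)^2 + f(eta)^2, and each half integrates to the total mass of K
   by translation invariance of Lebesgue measure. *)
lemma nn_integral_kernel_quadratic_le:
  fixes f K :: "'a::euclidean_space \<Rightarrow> real"
  assumes [measurable]: "f \<in> borel_measurable borel" "K \<in> borel_measurable borel"
    and K_nonneg: "\<And>\<zeta>. 0 \<le> K \<zeta>"
  shows "(\<integral>\<^sup>+\<xi>. (\<integral>\<^sup>+\<eta>. ennreal (f \<xi> * f \<eta> * K (\<xi> - \<eta>)) \<partial>lborel) \<partial>lborel)
    \<le> (\<integral>\<^sup>+\<zeta>. K \<zeta> \<partial>lborel) * (\<integral>\<^sup>+\<xi>. ennreal ((f \<xi>)\<^sup>2) \<partial>lborel)"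
proof -
  define P where "P = (\<integral>\<^sup>+\<zeta>. K \<zeta> \<partial>lborel)"
  define I where "I = (\<integral>\<^sup>+\<xi>. ennreal ((f \<xi>)\<^sup>2) \<partial>lborel)"
  have am_gm: "2 * ennreal (f \<xi> * f \<eta> * K (\<xi> - \<eta>))
      \<le> ennreal ((f \<xi>)\<^sup>2 * K (\<xi> - \<eta>)) + ennreal ((f \<eta>)\<^sup>2 * K (\<xi> - \<eta>))" for \<xi> \<eta>
  proof -
    have "2 * (f \<xi> * f \<eta>) \<le> (f \<xi>)\<^sup>2 + (f \<eta>)\<^sup>2"
      using sum_squares_bound[of "f \<xi>" "f \<eta>"] by simp
    then have "2 * (f \<xi> * f \<eta> * K (\<xi> - \<eta>)) \<le> (f \<xi>)\<^sup>2 * K (\<xi> - \<eta>) + (f \<eta>)\<^sup>2 * K (\<xi> - \<eta>)"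
      using K_nonneg[of "\<xi> - \<eta>"] by (metis distrib_right mult.assoc mult_right_mono)
    then have "ennreal (2 * (f \<xi> * f \<eta> * K (\<xi> - \<eta>)))
        \<le> ennreal ((f \<xi>)\<^sup>2 * K (\<xi> - \<eta>) + (f \<eta>)\<^sup>2 * K (\<xi> - \<eta>))"
      by (rule ennreal_leI)
    then show ?thesis
      using K_nonneg[of "\<xi> - \<eta>"] by (simp add: ennreal_mult')
  qed
  have "2 * (\<integral>\<^sup>+\<xi>. (\<integral>\<^sup>+\<eta>. ennreal (f \<xi> * f \<eta> * K (\<xi> - \<eta>)) \<partial>lborel) \<partial>lborel)
      \<le> (\<integral>\<^sup>+\<xi>. (\<integral>\<^sup>+\<eta>. ennreal ((f \<xi>)\<^sup>2 * K (\<xi> - \<eta>)) + ennreal ((f \<eta>)\<^sup>2 * K (\<xi> - \<eta>)) \<partial>lborel) \<partial>lborel)"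
    by (simp add: nn_integral_mono am_gm flip: nn_integral_cmult)
  also have "\<dots> = (\<integral>\<^sup>+\<xi>. (\<integral>\<^sup>+\<eta>. ennreal ((f \<xi>)\<^sup>2 * K (\<xi> - \<eta>)) \<partial>lborel) \<partial>lborel)
      + (\<integral>\<^sup>+\<eta>. (\<integral>\<^sup>+\<xi>. ennreal ((f \<eta>)\<^sup>2 * K (\<xi> - \<eta>)) \<partial>lborel) \<partial>lborel)"
    by (simp add: nn_integral_add
        flip: lborel_pair.Fubini'[where f="\<lambda>\<xi> \<eta>. ennreal ((f \<eta>)\<^sup>2 * K (\<xi> - \<eta>))"])
  also have "\<dots> = P * I + P * I"
    using K_nonneg
    by (simp add: P_def I_def ennreal_mult' nn_integral_cmult nn_integral_multc mult.commute
        nn_integral_lborel_translate[where f="\<lambda>\<zeta>. ennreal (K \<zeta>)"]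
        nn_integral_lborel_reflect[where f="\<lambda>\<zeta>. ennreal (K \<zeta>)"])
  finally show ?thesis
    unfolding P_def[symmetric] I_def[symmetric]
    by (simp add: ennreal_mult_le_mult_iff flip: mult_2)
qed

lemma ennreal_integral_mult_convolution:
  fixes g K :: "'a::euclidean_space \<Rightarrow> real"
  assumes g: "integrable lborel g" and g_nonneg: "\<And>\<xi>. 0 \<le> g \<xi>"
    and [measurable]: "K \<in> borel_measurable borel"
    and K_nonneg: "\<And>\<zeta>. 0 \<le> K \<zeta>" and K_le: "\<And>\<zeta>. K \<zeta> \<le> B"
  shows "ennreal (\<integral>\<xi>. g \<xi> * (\<integral>\<eta>. g \<eta> * K (\<xi> - \<eta>) \<partial>lborel) \<partial>lborel)
    = (\<integral>\<^sup>+\<xi>. (\<integral>\<^sup>+\<eta>. ennreal (g \<xi> * g \<eta> * K (\<xi> - \<eta>)) \<partial>lborel) \<partial>lborel)"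
proof -
  define H where "H \<xi> = (\<integral>\<eta>. g \<eta> * K (\<xi> - \<eta>) \<partial>lborel)" for \<xi>
  have [measurable]: "g \<in> borel_measurable borel"
    using g by (simp add: borel_measurable_integrable)
  have gK_nonneg: "0 \<le> g \<eta> * K \<zeta>" for \<eta> \<zeta>
    by (simp add: g_nonneg K_nonneg)
  have integrable_H: "integrable lborel (\<lambda>\<eta>. g \<eta> * K (\<xi> - \<eta>))" for \<xi>
    using g by (rule integrable_mult_bounded[where B=B]) (simp_all add: K_nonneg K_le)
  have H: "0 \<le> H \<xi>" "H \<xi> \<le> (\<integral>\<eta>. g \<eta> \<partial>lborel) * B" for \<xi>
  proof -
    show "0 \<le> H \<xi>"
      unfolding H_def using gK_nonneg by (intro integral_nonneg_AE AE_I2)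
    have "H \<xi> \<le> (\<integral>\<eta>. g \<eta> * B \<partial>lborel)"
      unfolding H_def using integrable_H integrable_mult_left[OF g]
      by (rule integral_mono) (simp add: g_nonneg K_le mult_left_mono)
    then show "H \<xi> \<le> (\<integral>\<eta>. g \<eta> \<partial>lborel) * B"
      by simp
  qed
  have integrable_gH: "integrable lborel (\<lambda>\<xi>. g \<xi> * H \<xi>)"
    using g by (rule integrable_mult_bounded) (use H in \<open>auto simp: H_def\<close>)
  have "ennreal (\<integral>\<xi>. g \<xi> * H \<xi> \<partial>lborel) = (\<integral>\<^sup>+\<xi>. ennreal (g \<xi> * H \<xi>) \<partial>lborel)"
    using integrable_gH H by (intro nn_integral_eq_integral[symmetric]) (auto simp: g_nonneg)
  also have "\<dots> = (\<integral>\<^sup>+\<xi>. ennreal (g \<xi>) * (\<integral>\<^sup>+\<eta>. ennreal (g \<eta> * K (\<xi> - \<eta>)) \<partial>lborel) \<partial>lborel)"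
    unfolding H_def using integrable_H gK_nonneg
    by (simp add: ennreal_mult g_nonneg integral_nonneg_AE flip: nn_integral_eq_integral)
  also have "\<dots> = (\<integral>\<^sup>+\<xi>. (\<integral>\<^sup>+\<eta>. ennreal (g \<xi> * g \<eta> * K (\<xi> - \<eta>)) \<partial>lborel) \<partial>lborel)"
    by (simp add: ennreal_mult' g_nonneg mult.assoc flip: nn_integral_cmult)
  finally show ?thesis
    unfolding H_def .
qed

section \<open>Gaussians and their Fourier transforms\<close>

definition gauss :: "real \<Rightarrow> 'a::euclidean_space \<Rightarrow> real" where
  "gauss a x = exp (- (norm x)\<^sup>2 / (2 * a\<^sup>2))"

lemma gauss_pos: "gauss a x > 0"
  by (simp add: gauss_def)

lemma gauss_le_1: "gauss a x \<le> 1"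
  by (simp add: gauss_def)

lemma borel_measurable_gauss[measurable]: "gauss a \<in> borel_measurable borel"
  unfolding gauss_def divide_inverse by (intro borel_measurable_continuous_onI continuous_intros)

lemma gauss_eq_prod_Basis: "gauss a x = (\<Prod>b\<in>Basis. gauss a (x \<bullet> b))"
proof -
  have "- (norm x)\<^sup>2 / (2 * a\<^sup>2) = (\<Sum>b\<in>Basis. - (x \<bullet> b)\<^sup>2 / (2 * a\<^sup>2))"
    unfolding power2_norm_eq_inner euclidean_inner[of x x]
    by (simp add: power2_eq_square sum_divide_distrib sum_negf)
  then show ?thesis
    by (simp add: gauss_def exp_sum)
qed

lemma has_bochner_integral_gauss_real:
  assumes "a > 0" shows "has_bochner_integral lborel (gauss a :: real \<Rightarrow> real) (a * sqrt (2 * pi))"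
proof -
  have "has_bochner_integral lborel (\<lambda>y. a * sqrt (2 * pi) * normal_density 0 a y) (a * sqrt (2 * pi) * 1)"
    using assms by (intro has_bochner_integral_mult_right) (simp add: has_bochner_integral_iff)
  moreover have "gauss a = (\<lambda>y::real. a * sqrt (2 * pi) * normal_density 0 a y)"
    using assms by (simp add: fun_eq_iff gauss_def normal_density_def real_sqrt_mult)
  ultimately show ?thesis
    by simp
qed

lemma nn_integral_gauss:
  assumes "a > 0"
  shows "(\<integral>\<^sup>+x. gauss a (x::'a::euclidean_space) \<partial>lborel) = ennreal ((a * sqrt (2 * pi)) ^ DIM('a))"
proof -
  have "(\<integral>\<^sup>+y. gauss a (y::real) \<partial>lborel) = ennreal (a * sqrt (2 * pi))"
    using has_bochner_integral_gauss_real[OF assms]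
    by (simp add: has_bochner_integral_iff nn_integral_eq_integral less_imp_le[OF gauss_pos])
  moreover have "(\<integral>\<^sup>+x. gauss a (x::'a) \<partial>lborel) = (\<integral>\<^sup>+x. (\<Prod>b\<in>Basis. ennreal (gauss a ((x::'a) \<bullet> b))) \<partial>lborel)"
    by (intro nn_integral_cong, subst gauss_eq_prod_Basis) (simp add: prod_ennreal less_imp_le[OF gauss_pos])
  moreover have "\<dots> = (\<Prod>b\<in>(Basis::'a set). \<integral>\<^sup>+y. gauss a (y::real) \<partial>lborel)"
    by (rule nn_integral_lborel_prod[where f="\<lambda>_ y. ennreal (gauss a y)"]) auto
  ultimately show ?thesis
    using assms by (simp add: ennreal_power)
qed

lemma integrable_gauss: "a > 0 \<Longrightarrow> integrable lborel (gauss a :: 'a::euclidean_space \<Rightarrow> real)"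
  by (rule integrableI_nonneg) (auto simp: less_imp_le[OF gauss_pos] nn_integral_gauss)

lemma gauss_Suc_tendsto_1: "(\<lambda>n. gauss (real (Suc n)) x) \<longlonglongrightarrow> 1"
proof -
  have "(\<lambda>n. exp (- (norm x)\<^sup>2 / 2 * (inverse (real (Suc n)))\<^sup>2)) \<longlonglongrightarrow> exp (- (norm x)\<^sup>2 / 2 * 0\<^sup>2)"
    by (intro tendsto_intros LIMSEQ_inverse_real_of_nat)
  moreover have "gauss (real (Suc n)) x = exp (- (norm x)\<^sup>2 / 2 * (inverse (real (Suc n)))\<^sup>2)" for n
    by (simp add: gauss_def field_simps)
  ultimately show ?thesis
    by simp
qed

definition fourier :: "('a::euclidean_space \<Rightarrow> real) \<Rightarrow> 'a \<Rightarrow> complex" where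
  "fourier g x = (\<integral>\<xi>. complex_of_real (g \<xi>) * cis (x \<bullet> \<xi>) \<partial>lborel)"

lemma borel_measurable_fourier[measurable]:
  assumes [measurable]: "g \<in> borel_measurable borel"
  shows "fourier g \<in> borel_measurable borel"
  unfolding fourier_def by (rule lborel.borel_measurable_lebesgue_integral) measurable

lemma norm_fourier_le: "norm (fourier g x) \<le> (\<integral>\<xi>. \<bar>g \<xi>\<bar> \<partial>lborel)"
  unfolding fourier_def by (rule order_trans[OF integral_norm_bound]) (simp add: norm_mult)

lemma cnj_fourier: "cnj (fourier g x) = fourier g (- x)"
  unfolding fourier_def Bochner_Integration.integral_cnj[symmetric] by (simp add: cis_cnj)

lemma fourier_gauss_real:
  assumes a: "a > 0"
  shows "fourier (gauss a) (s::real) = complex_of_real (a * sqrt (2 * pi) * gauss (1 / a) s)"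
proof -
  have "char std_normal_distribution (a * s) =
      (\<integral>x. std_normal_density x *\<^sub>R iexp (a * s * x) \<partial>lborel)"
    unfolding char_def by (subst integral_density) auto
  also have "\<dots> = complex_of_real (1 / sqrt (2 * pi)) *
      (\<integral>x. complex_of_real (exp (- x\<^sup>2 / 2)) * cis (s * (a * x)) \<partial>lborel)"
    by (simp add: std_normal_density_def cis_conv_exp scaleR_conv_of_real mult_ac)
  also have "(\<integral>x. complex_of_real (exp (- x\<^sup>2 / 2)) * cis (s * (a * x)) \<partial>lborel) =
      (1 / a) *\<^sub>R fourier (gauss a) s"
    using a unfolding fourier_def
    by (subst lborel_integral_real_affine[where c=a and t=0])
       (simp_all add: gauss_def power_mult_distrib)
  finally have "complex_of_real (exp (- (a * s)\<^sup>2 / 2)) =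
      complex_of_real (1 / sqrt (2 * pi)) * ((1 / a) *\<^sub>R fourier (gauss a) s)"
    by (simp add: char_std_normal_distribution)
  then show ?thesis
    using a by (simp add: gauss_def scaleR_conv_of_real field_simps power_mult_distrib)
qed

lemma fourier_gauss:
  assumes a: "a > 0"
  shows "fourier (gauss a) \<zeta> = complex_of_real ((a * sqrt (2 * pi)) ^ DIM('a) * gauss (1 / a) (\<zeta>::'a::euclidean_space))"
proof -
  define h where "h b y = complex_of_real (gauss a y) * cis ((\<zeta> \<bullet> b) * y)" for b :: 'a and y :: real
  have integrable_h: "integrable lborel (h b)" for b
  proof (rule Bochner_Integration.integrable_bound)
    show "integrable lborel (gauss a :: real \<Rightarrow> real)"
      using a by (rule integrable_gauss)
    show "AE y in lborel. norm (h b y) \<le> norm (gauss a y)"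
      by (simp add: h_def norm_mult)
    show "h b \<in> borel_measurable lborel"
      unfolding h_def by measurable
  qed
  have "complex_of_real (gauss a x) * cis (\<zeta> \<bullet> x) = (\<Prod>b\<in>Basis. h b (x \<bullet> b))" for x
  proof -
    have "\<zeta> \<bullet> x = (\<Sum>b\<in>Basis. (\<zeta> \<bullet> b) * (x \<bullet> b))"
      by (rule euclidean_inner)
    then show ?thesis
      unfolding h_def by (simp only: gauss_eq_prod_Basis[of a x] cis_sum[OF finite_Basis] of_real_prod prod.distrib)
  qed
  then have "fourier (gauss a) \<zeta> = (\<integral>x. (\<Prod>b\<in>Basis. h b (x \<bullet> b)) \<partial>lborel)"
    by (simp add: fourier_def)
  also have "\<dots> = (\<Prod>b\<in>Basis. fourier (gauss a) (\<zeta> \<bullet> b))"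
    by (simp add: integral_lborel_prod integrable_h) (simp add: h_def fourier_def)
  also have "\<dots> = complex_of_real (\<Prod>b\<in>Basis. a * sqrt (2 * pi) * gauss (1 / a) (\<zeta> \<bullet> b))"
    by (simp add: fourier_gauss_real[OF a] of_real_prod)
  finally show ?thesis
    by (simp add: prod.distrib gauss_eq_prod_Basis[of "1 / a" \<zeta>])
qed

section \<open>A Plancherel inequality\<close>

lemma integral_gauss_cis_mult_cnj_fourier:
  fixes g :: "'a::euclidean_space \<Rightarrow> real"
  assumes g: "integrable lborel g" and a: "a > 0"
  shows "(\<integral>x. complex_of_real (gauss a x) * cis (x \<bullet> \<xi>) * cnj (fourier g x) \<partial>lborel)
    = complex_of_real ((a * sqrt (2 * pi)) ^ DIM('a) * (\<integral>\<eta>. g \<eta> * gauss (1 / a) (\<xi> - \<eta>) \<partial>lborel))"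
proof -
  have [measurable]: "g \<in> borel_measurable borel"
    using g by (simp add: borel_measurable_integrable)
  have cis_diff: "cis ((\<xi> - \<eta>) \<bullet> x) = cis (x \<bullet> \<xi>) * cis (- (x \<bullet> \<eta>))" for x \<eta>
    by (simp add: inner_diff_left inner_commute[of x] cis_mult)
  have "(\<integral>x. complex_of_real (gauss a x) * cis (x \<bullet> \<xi>) * cnj (fourier g x) \<partial>lborel)
      = (\<integral>x. (\<integral>\<eta>. complex_of_real (g \<eta>) * (complex_of_real (gauss a x) * cis ((\<xi> - \<eta>) \<bullet> x)) \<partial>lborel) \<partial>lborel)"
    unfolding cnj_fourier cis_diff by (simp add: fourier_def mult_ac flip: integral_mult_right_zero)
  also have "\<dots> = (\<integral>\<eta>. (\<integral>x. complex_of_real (g \<eta>) * (complex_of_real (gauss a x) * cis ((\<xi> - \<eta>) \<bullet> x)) \<partial>lborel) \<partial>lborel)"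
    using integrable_gauss[OF a] integrable_abs[OF g]
    by (rule integral_lborel_swap_bound[rotated]) (auto simp: norm_mult abs_of_pos[OF gauss_pos])
  also have "\<dots> = (\<integral>\<eta>. complex_of_real (g \<eta>) * fourier (gauss a) (\<xi> - \<eta>) \<partial>lborel)"
    by (simp add: fourier_def)
  finally show ?thesis
    by (simp add: fourier_gauss[OF a] mult_ac flip: integral_mult_right_zero integral_complex_of_real)
qed

lemma integral_gauss_norm_fourier_sq:
  fixes g :: "'a::euclidean_space \<Rightarrow> real"
  assumes g: "integrable lborel g" and a: "a > 0"
  shows "(\<integral>x. gauss a x * (norm (fourier g x))\<^sup>2 \<partial>lborel) =
    (a * sqrt (2 * pi)) ^ DIM('a) * (\<integral>\<xi>. g \<xi> * (\<integral>\<eta>. g \<eta> * gauss (1 / a) (\<xi> - \<eta>) \<partial>lborel) \<partial>lborel)"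
proof -
  define c where "c = (a * sqrt (2 * pi)) ^ DIM('a)"
  define H where "H \<xi> = (\<integral>\<eta>. g \<eta> * gauss (1 / a) (\<xi> - \<eta>) \<partial>lborel)" for \<xi>
  have [measurable]: "g \<in> borel_measurable borel"
    using g by (simp add: borel_measurable_integrable)
  have "complex_of_real (\<integral>x. gauss a x * (norm (fourier g x))\<^sup>2 \<partial>lborel)
      = (\<integral>x. complex_of_real (gauss a x) * fourier g x * cnj (fourier g x) \<partial>lborel)"
    by (simp only: of_real_mult complex_norm_square mult.assoc flip: integral_complex_of_real)
  also have "\<dots> = (\<integral>x. (\<integral>\<xi>. complex_of_real (g \<xi>) *
      (complex_of_real (gauss a x) * cis (x \<bullet> \<xi>) * cnj (fourier g x)) \<partial>lborel) \<partial>lborel)"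
    by (simp add: fourier_def mult_ac flip: integral_mult_left_zero integral_mult_right_zero)
  also have "\<dots> = (\<integral>\<xi>. (\<integral>x. complex_of_real (g \<xi>) *
      (complex_of_real (gauss a x) * cis (x \<bullet> \<xi>) * cnj (fourier g x)) \<partial>lborel) \<partial>lborel)"
  proof (rule integral_lborel_swap_bound[where u="\<lambda>x. gauss a x * (\<integral>\<eta>. \<bar>g \<eta>\<bar> \<partial>lborel)"])
    show "integrable lborel (\<lambda>x::'a. gauss a x * (\<integral>\<eta>. \<bar>g \<eta>\<bar> \<partial>lborel))"
      using integrable_gauss[OF a] by (rule integrable_mult_left)
    show "norm (complex_of_real (g \<xi>) * (complex_of_real (gauss a x) * cis (x \<bullet> \<xi>) * cnj (fourier g x)))
        \<le> gauss a x * (\<integral>\<eta>. \<bar>g \<eta>\<bar> \<partial>lborel) * \<bar>g \<xi>\<bar>" for x \<xi>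
      using norm_fourier_le[of g x] gauss_pos[of a x]
      by (simp add: norm_mult abs_of_pos mult_left_mono mult_ac)
  qed (use g in \<open>unfold cnj_fourier, measurable\<close>)
  also have "\<dots> = (\<integral>\<xi>. complex_of_real (g \<xi> * (c * H \<xi>)) \<partial>lborel)"
    by (simp only: integral_mult_right_zero integral_gauss_cis_mult_cnj_fourier[OF g a] c_def H_def of_real_mult)
  also have "\<dots> = complex_of_real (c * (\<integral>\<xi>. g \<xi> * H \<xi> \<partial>lborel))"
    by (simp add: mult.left_commute[of _ c] flip: of_real_mult)
  finally show ?thesis
    unfolding c_def H_def of_real_eq_iff .
qed

lemma nn_integral_gauss_norm_fourier_sq_le:
  fixes g :: "'a::euclidean_space \<Rightarrow> real"
  assumes g: "integrable lborel g" and g_nonneg: "\<And>\<xi>. 0 \<le> g \<xi>" and a: "a > 0"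
  shows "(\<integral>\<^sup>+x. ennreal (gauss a x * (norm (fourier g x))\<^sup>2) \<partial>lborel)
    \<le> (2 * pi) ^ DIM('a) * (\<integral>\<^sup>+\<xi>. ennreal ((g \<xi>)\<^sup>2) \<partial>lborel)"
proof -
  define c where "c = (a * sqrt (2 * pi)) ^ DIM('a)"
  define K :: "'a \<Rightarrow> real" where "K = gauss (1 / a)"
  have [measurable]: "g \<in> borel_measurable borel"
    using g by (simp add: borel_measurable_integrable)
  have K: "0 \<le> K \<zeta>" "K \<zeta> \<le> 1" for \<zeta>
    by (simp_all add: K_def less_imp_le[OF gauss_pos] gauss_le_1)
  have "(\<integral>\<^sup>+x. ennreal (gauss a x * (norm (fourier g x))\<^sup>2) \<partial>lborel)
      = ennreal (\<integral>x. gauss a x * (norm (fourier g x))\<^sup>2 \<partial>lborel)"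
  proof (rule nn_integral_eq_integral)
    show "integrable lborel (\<lambda>x. gauss a x * (norm (fourier g x))\<^sup>2)"
      using integrable_gauss[OF a]
      by (rule integrable_mult_bounded[where B="(\<integral>\<xi>. \<bar>g \<xi>\<bar> \<partial>lborel)\<^sup>2"])
         (simp_all add: norm_fourier_le power_mono)
  qed (simp add: less_imp_le[OF gauss_pos])
  also have "\<dots> = ennreal c * ennreal (\<integral>\<xi>. g \<xi> * (\<integral>\<eta>. g \<eta> * K (\<xi> - \<eta>) \<partial>lborel) \<partial>lborel)"
    using a by (simp add: integral_gauss_norm_fourier_sq[OF g a] ennreal_mult' c_def K_def)
  also have "ennreal (\<integral>\<xi>. g \<xi> * (\<integral>\<eta>. g \<eta> * K (\<xi> - \<eta>) \<partial>lborel) \<partial>lborel)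
      = (\<integral>\<^sup>+\<xi>. (\<integral>\<^sup>+\<eta>. ennreal (g \<xi> * g \<eta> * K (\<xi> - \<eta>)) \<partial>lborel) \<partial>lborel)"
    by (rule ennreal_integral_mult_convolution[OF g g_nonneg _ K]) (simp add: K_def)
  also have "\<dots> \<le> (\<integral>\<^sup>+\<zeta>. K \<zeta> \<partial>lborel) * (\<integral>\<^sup>+\<xi>. ennreal ((g \<xi>)\<^sup>2) \<partial>lborel)"
    using K by (intro nn_integral_kernel_quadratic_le) (simp_all add: K_def)
  also have "(\<integral>\<^sup>+\<zeta>. K \<zeta> \<partial>lborel) = ennreal ((sqrt (2 * pi) / a) ^ DIM('a))"
    using a by (simp add: K_def nn_integral_gauss)
  also have "ennreal c * (ennreal ((sqrt (2 * pi) / a) ^ DIM('a)) * (\<integral>\<^sup>+\<xi>. ennreal ((g \<xi>)\<^sup>2) \<partial>lborel))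
      = ennreal (c * (sqrt (2 * pi) / a) ^ DIM('a)) * (\<integral>\<^sup>+\<xi>. ennreal ((g \<xi>)\<^sup>2) \<partial>lborel)"
    using a by (simp add: c_def ennreal_mult' mult.assoc)
  also have "c * (sqrt (2 * pi) / a) ^ DIM('a) = (2 * pi) ^ DIM('a)"
  proof -
    have "a * sqrt (2 * pi) * (sqrt (2 * pi) / a) = 2 * pi"
      using a by simp
    then show ?thesis
      by (simp only: c_def flip: power_mult_distrib)
  qed
  finally show ?thesis
    by (simp add: mult_left_mono)
qed

lemma nn_integral_norm_fourier_sq_le:
  fixes g :: "'a::euclidean_space \<Rightarrow> real"
  assumes g: "integrable lborel g" and g_nonneg: "\<And>\<xi>. 0 \<le> g \<xi>"
  shows "(\<integral>\<^sup>+x. ennreal ((norm (fourier g x))\<^sup>2) \<partial>lborel)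
    \<le> (2 * pi) ^ DIM('a) * (\<integral>\<^sup>+\<xi>. ennreal ((g \<xi>)\<^sup>2) \<partial>lborel)"
proof -
  have [measurable]: "g \<in> borel_measurable borel"
    using g by (simp add: borel_measurable_integrable)
  define u where "u n x = ennreal (gauss (real (Suc n)) x * (norm (fourier g x))\<^sup>2)" for n x
  have "ennreal ((norm (fourier g x))\<^sup>2) = liminf (\<lambda>n. u n x)" for x
  proof (rule lim_imp_Liminf[symmetric])
    have "(\<lambda>n. gauss (real (Suc n)) x * (norm (fourier g x))\<^sup>2) \<longlonglongrightarrow> 1 * (norm (fourier g x))\<^sup>2"
      by (intro tendsto_mult gauss_Suc_tendsto_1 tendsto_const)
    then show "(\<lambda>n. u n x) \<longlonglongrightarrow> ennreal ((norm (fourier g x))\<^sup>2)"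
      unfolding u_def by (intro tendsto_ennrealI) simp
  qed simp
  then have "(\<integral>\<^sup>+x. ennreal ((norm (fourier g x))\<^sup>2) \<partial>lborel) = (\<integral>\<^sup>+x. liminf (\<lambda>n. u n x) \<partial>lborel)"
    by simp
  also have "\<dots> \<le> liminf (\<lambda>n. integral\<^sup>N lborel (u n))"
    by (rule nn_integral_liminf) (simp add: u_def)
  also have "\<dots> \<le> (2 * pi) ^ DIM('a) * (\<integral>\<^sup>+\<xi>. ennreal ((g \<xi>)\<^sup>2) \<partial>lborel)"
    unfolding u_def using g g_nonneg
    by (intro Liminf_le always_eventually allI nn_integral_gauss_norm_fourier_sq_le) simp_all
  finally show ?thesis .
qed

section \<open>Boundedness of the biharmonic heat semigroup on exp L^2\<close>

definition biharm_symbol :: "real \<Rightarrow> 'a::euclidean_space \<Rightarrow> real" where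
  "biharm_symbol t \<xi> = exp (- t * norm \<xi> ^ 4)"

lemma biharm_kernel_eq_fourier:
  "biharm_kernel t x = complex_of_real (1 / (2 * pi) ^ DIM('a)) * fourier (biharm_symbol t) (x::'a::euclidean_space)"
  unfolding biharm_kernel_def fourier_def biharm_symbol_def ..

lemma borel_measurable_biharm_symbol[measurable]: "biharm_symbol t \<in> borel_measurable borel"
  unfolding biharm_symbol_def by (intro borel_measurable_continuous_onI continuous_intros)

lemma biharm_symbol_le_gauss:
  assumes t: "t > 0"
  shows "biharm_symbol t \<xi> \<le> exp (1 / (4 * t)) * gauss (sqrt (1 / 2)) \<xi>"
proof -
  have "0 \<le> (2 * t * (norm \<xi>)\<^sup>2 - 1)\<^sup>2 / (4 * t)"
    using t by simp
  also have "\<dots> = t * norm \<xi> ^ 4 - (norm \<xi>)\<^sup>2 + 1 / (4 * t)"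
    using t by (simp add: field_simps power2_eq_square power4_eq_xxxx)
  finally have "- t * norm \<xi> ^ 4 \<le> 1 / (4 * t) + - (norm \<xi>)\<^sup>2"
    by simp
  then show ?thesis
    by (simp add: biharm_symbol_def gauss_def flip: exp_add)
qed

lemma integrable_biharm_symbol:
  assumes t: "t > 0"
  shows "integrable lborel (biharm_symbol t :: 'a::euclidean_space \<Rightarrow> real)"
proof (rule Bochner_Integration.integrable_bound)
  show "integrable lborel (\<lambda>\<xi>::'a. exp (1 / (4 * t)) * gauss (sqrt (1 / 2)) \<xi>)"
    by (intro integrable_mult_right integrable_gauss) simp
  show "AE \<xi> in lborel. norm (biharm_symbol t \<xi>) \<le> norm (exp (1 / (4 * t)) * gauss (sqrt (1 / 2)) (\<xi>::'a))"
    using biharm_symbol_le_gauss[OF t] gauss_pos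
    by (intro AE_I2) (simp add: biharm_symbol_def abs_mult abs_of_pos[OF gauss_pos])
qed simp

lemma nn_integral_norm_biharm_kernel_sq_finite:
  assumes t: "t > 0"
  shows "(\<integral>\<^sup>+x. ennreal ((norm (biharm_kernel t (x::'a::euclidean_space)))\<^sup>2) \<partial>lborel) < \<infinity>"
proof -
  define c :: real where "c = 1 / (2 * pi) ^ DIM('a)"
  have "(\<integral>\<^sup>+\<xi>. ennreal ((biharm_symbol t (\<xi>::'a))\<^sup>2) \<partial>lborel) = (\<integral>\<^sup>+\<xi>. ennreal (biharm_symbol (2 * t) (\<xi>::'a)) \<partial>lborel)"
    by (simp add: biharm_symbol_def power2_eq_square mult.assoc flip: exp_add)
  also have "\<dots> < \<infinity>"
    using integrable_biharm_symbol[of "2 * t", where 'a='a] t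
    by (simp add: integrable_iff_bounded biharm_symbol_def)
  finally have "(\<integral>\<^sup>+x. ennreal ((norm (fourier (biharm_symbol t) (x::'a)))\<^sup>2) \<partial>lborel) < \<infinity>"
    using nn_integral_norm_fourier_sq_le[OF integrable_biharm_symbol[OF t]]
    by (auto simp: biharm_symbol_def ennreal_mult_less_top intro: le_less_trans)
  moreover have "ennreal ((norm (biharm_kernel t x))\<^sup>2) = ennreal (c\<^sup>2) * ennreal ((norm (fourier (biharm_symbol t) x))\<^sup>2)"
    for x :: 'a
    unfolding biharm_kernel_eq_fourier c_def[symmetric]
    by (simp only: norm_mult norm_of_real power_mult_distrib
        power2_abs ennreal_mult[OF zero_le_power2 zero_le_power2])
  ultimately show ?thesis
    by (simp add: nn_integral_cmult ennreal_mult_less_top)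
qed

lemma nn_integral_square_lt_top_if_expL2:
  assumes "u \<in> expL2"
  shows "(\<integral>\<^sup>+y. ennreal ((u y)\<^sup>2) \<partial>lebesgue) < \<infinity>"
proof -
  obtain \<alpha> where \<alpha>: "\<alpha> > 0" and fin: "(\<integral>\<^sup>+y. ennreal (exp ((u y)\<^sup>2 / \<alpha>\<^sup>2) - 1) \<partial>lebesgue) < \<infinity>"
    using assms by (auto simp: expL2_def)
  have [measurable]: "u \<in> borel_measurable lebesgue"
    using assms by (simp add: expL2_def loc_integrable_def)
  have "(u y)\<^sup>2 \<le> \<alpha>\<^sup>2 * (exp ((u y)\<^sup>2 / \<alpha>\<^sup>2) - 1)" for y
    using exp_ge_add_one_self[of "(u y)\<^sup>2 / \<alpha>\<^sup>2"] \<alpha> by (simp add: field_simps)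
  then have "(\<integral>\<^sup>+y. ennreal ((u y)\<^sup>2) \<partial>lebesgue)
      \<le> (\<integral>\<^sup>+y. ennreal (\<alpha>\<^sup>2) * ennreal (exp ((u y)\<^sup>2 / \<alpha>\<^sup>2) - 1) \<partial>lebesgue)"
    by (intro nn_integral_mono) (simp add: ennreal_mult'[symmetric])
  also have "\<dots> < \<infinity>"
    using fin by (simp add: nn_integral_cmult ennreal_mult_less_top)
  finally show ?thesis .
qed

lemma norm_convolution_le:
  fixes E :: "'a::euclidean_space \<Rightarrow> complex" and u :: "'a \<Rightarrow> real"
  assumes [measurable]: "E \<in> borel_measurable borel" "u \<in> borel_measurable lebesgue"
  shows "ennreal (norm (\<integral>y. E (x - y) * complex_of_real (u y) \<partial>lebesgue))
    \<le> (\<integral>\<^sup>+z. ennreal ((norm (E z))\<^sup>2) \<partial>lborel) + (\<integral>\<^sup>+y. ennreal ((u y)\<^sup>2) \<partial>lebesgue)"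
proof (cases "integrable lebesgue (\<lambda>y. E (x - y) * complex_of_real (u y))")
  case True
  have "ennreal (norm (\<integral>y. E (x - y) * complex_of_real (u y) \<partial>lebesgue))
      \<le> (\<integral>\<^sup>+y. ennreal (norm (E (x - y) * complex_of_real (u y))) \<partial>lebesgue)"
    using True by (rule integral_norm_bound_ennreal)
  also have "\<dots> \<le> (\<integral>\<^sup>+y. ennreal ((norm (E (x - y)))\<^sup>2) + ennreal ((u y)\<^sup>2) \<partial>lebesgue)"
  proof (intro nn_integral_mono)
    fix y
    have "2 * (norm (E (x - y)) * \<bar>u y\<bar>) \<le> (norm (E (x - y)))\<^sup>2 + (u y)\<^sup>2"
      using sum_squares_bound[of "norm (E (x - y))" "\<bar>u y\<bar>"] by (simp add: mult.assoc)
    moreover have "0 \<le> norm (E (x - y)) * \<bar>u y\<bar>"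
      by simp
    ultimately have "norm (E (x - y)) * \<bar>u y\<bar> \<le> (norm (E (x - y)))\<^sup>2 + (u y)\<^sup>2"
      by linarith
    then show "ennreal (norm (E (x - y) * complex_of_real (u y)))
        \<le> ennreal ((norm (E (x - y)))\<^sup>2) + ennreal ((u y)\<^sup>2)"
      by (simp add: norm_mult flip: ennreal_plus)
  qed
  also have "\<dots> = (\<integral>\<^sup>+y. ennreal ((norm (E (x - y)))\<^sup>2) \<partial>lborel) + (\<integral>\<^sup>+y. ennreal ((u y)\<^sup>2) \<partial>lebesgue)"
    by (subst nn_integral_add) (auto intro: measurable_completion simp: nn_integral_completion)
  also have "(\<integral>\<^sup>+y. ennreal ((norm (E (x - y)))\<^sup>2) \<partial>lborel) = (\<integral>\<^sup>+z. ennreal ((norm (E z))\<^sup>2) \<partial>lborel)"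
    by (rule nn_integral_lborel_reflect[where f="\<lambda>z. ennreal ((norm (E z))\<^sup>2)"]) measurable
  finally show ?thesis .
next
  case False \<comment> \<open>the Bochner integral of a non-integrable function is 0\<close>
  then show ?thesis
    by (simp add: not_integrable_integral_eq)
qed

lemma biharm_heat_bounded:
  assumes t: "t > 0" and u0: "u0 \<in> expL2"
  shows "\<exists>M. \<forall>x. norm (biharm_heat t u0 (x::'a::euclidean_space)) \<le> M"
proof -
  define A where "A = (\<integral>\<^sup>+z. ennreal ((norm (biharm_kernel t (z::'a)))\<^sup>2) \<partial>lborel)"
  define B where "B = (\<integral>\<^sup>+y. ennreal ((u0 y)\<^sup>2) \<partial>lebesgue)"
  have "A + B < \<infinity>"
    using nn_integral_norm_biharm_kernel_sq_finite[OF t] nn_integral_square_lt_top_if_expL2[OF u0]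
    by (simp add: A_def B_def)
  moreover have "ennreal (norm (biharm_heat t u0 x)) \<le> A + B" for x
    unfolding biharm_heat_def A_def B_def
  proof (rule norm_convolution_le)
    show "u0 \<in> borel_measurable lebesgue"
      using u0 by (simp add: expL2_def loc_integrable_def)
    show "biharm_kernel t \<in> borel_measurable borel"
      unfolding biharm_kernel_eq_fourier[abs_def] by measurable
  qed
  ultimately have "norm (biharm_heat t u0 x) \<le> enn2real (A + B)" for x
    using enn2real_mono[of "ennreal (norm (biharm_heat t u0 x))" "A + B"] by simp
  then show ?thesis
    by blast
qed

section \<open>Rearrangements of bounded functions\<close>

lemma borel_measurable_rearr2: "rearr2 u \<in> borel_measurable borel"
proof -
  define F where "F r = (\<integral>\<^sup>+\<eta>\<in>{0..r}. rearr u \<eta> \<partial>lborel)" for r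
  have "mono F"
    unfolding F_def by (intro monoI nn_integral_mono) (auto split: split_indicator)
  then have [measurable]: "F \<in> borel_measurable borel"
    by (rule borel_measurable_mono_ennreal)
  have "rearr2 u = (\<lambda>r. F r / ennreal r)"
    by (simp add: fun_eq_iff rearr2_def F_def)
  then show ?thesis
    by simp
qed

lemma rearr_le_bound:
  assumes "\<And>x. norm (u x) \<le> M" and "M > 0"
  shows "rearr u r \<le> ennreal M"
proof -
  have "{x. norm (u x) > M} = {}"
    using assms(1) by (auto simp: not_less)
  then have "distrib_fun u M = 0"
    by (simp add: distrib_fun_def)
  then show ?thesis
    unfolding rearr_def using assms(2) by (intro INF_lower) simp
qed

lemma rearr2_le_bound:
  assumes "\<And>x. norm (u x) \<le> M" and "M > 0" and "r > 0"
  shows "rearr2 u r \<le> ennreal M"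
proof -
  have "(\<integral>\<^sup>+\<eta>\<in>{0..r}. rearr u \<eta> \<partial>lborel) \<le> (\<integral>\<^sup>+\<eta>. ennreal M * indicator {0..r} \<eta> \<partial>lborel)"
    using rearr_le_bound[OF assms(1,2)] by (intro nn_integral_mono mult_right_mono) simp_all
  also have "\<dots> = ennreal M * ennreal r"
    using assms(3) by (subst nn_integral_cmult_indicator) simp_all
  finally have "rearr2 u r \<le> ennreal M * ennreal r / ennreal r"
    unfolding rearr2_def by (rule divide_right_mono_ennreal)
  also have "\<dots> = ennreal M"
    using assms(3) by (intro ennreal_mult_divide_eq) simp_all
  finally show ?thesis .
qed

lemma Linfty_pos_rearr2_if_bounded:
  assumes "\<And>x. norm (u x) \<le> M"
  shows "Linfty_pos (rearr2 u)"
  unfolding Linfty_pos_def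
proof
  show "rearr2 u \<in> borel_measurable (restrict_space lborel {0<..})"
    by (rule measurable_restrict_space1) (simp add: borel_measurable_rearr2)
  have "norm (u x) \<le> max M 1" for x
    using assms[of x] by linarith
  then have "r > 0 \<longrightarrow> rearr2 u r \<le> ennreal (max M 1)" for r
    using rearr2_le_bound[of u "max M 1" r] by simp
  then show "\<exists>C. AE r in lborel. r > 0 \<longrightarrow> rearr2 u r \<le> ennreal C"
    by blast
qed

theorem proposition3p10:
  fixes u0 :: "'a::euclidean_space \<Rightarrow> real" and t :: real
  assumes "t > 0" and "u0 \<in> expL2"
  shows "Linfty_pos (rearr2 (biharm_heat t u0))"
proof -
  obtain M where "\<And>x. norm (biharm_heat t u0 x) \<le> M"
    using biharm_heat_bounded[OF assms] by blast
  then show ?thesis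
    by (rule Linfty_pos_rearr2_if_bounded)
qed

end
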